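(* Let $\varphi:\Sigma\to I$ depend only on finitely many coordinates of $\omega$, and suppose its graph $\Gamma$ drifts up (resp. down). For $n\ge0$ let $\varphi_n$ be the function whose graph is $F^n(\Gamma)$, i.e. $\varphi_n(\omega)=f_{\omega_{-1}}\circ\dots\circ f_{\omega_{-n}}(\varphi(\sigma^{-n}\omega))$. Then: (1) the pointwise limit $\varphi_{+\infty}(\omega)=\lim_{n\to+\infty}\varphi_n(\omega)$ exists for every $\omega$ and defines a measurable function $\varphi_{+\infty}:\Sigma\to I$; (2) $\varphi_{+\infty}(\omega)$ does not depend on the future of $\omega$: if $\omega_j=\omega'_j$ for all $j\le-1$ then $\varphi_{+\infty}(\omega)=\varphi_{+\infty}(\omega')$; (3) $\varphi_{+\infty}$ is $F$-invariant: $\varphi_{+\infty}(\sigma\omega)=f_{\omega_0}(\varphi_{+\infty}(\omega))$.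
   Context: $\Sigma$: two-sided transitive subshift of finite type over $\{1,\dots,N\}$ with left shift $\sigma$, $(\sigma\omega)_n=\omega_{n+1}$. $I=[0,1]$; $F(\omega,x)=(\sigma\omega,f_{\omega_0}(x))$ with $f_k:I\to I$ strictly increasing $C^1$ diffeomorphisms onto their images. For functions $\psi_1,\psi_2:\Sigma\to I$, $\psi_1<\psi_2$ means $\psi_1(\omega)<\psi_2(\omega)$ for all $\omega$; the same notation is used for their graphs. $F(\Gamma)$ is again the graph of a function; the graph $\Gamma$ drifts up (down) if $F(\Gamma)>\Gamma$ (resp. $F(\Gamma)<\Gamma$). *)

theory Defs
  imports "HOL-Analysis.Analysis" "HOL-Probability.Probability"
begin

text \<open>Two-sided sequences over the alphabet {1..N} are functions int => nat.\<close>

definition shift :: "(int \<Rightarrow> nat) \<Rightarrow> (int \<Rightarrow> nat)" where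
  "shift \<omega> = (\<lambda>n. \<omega> (n + 1))"

definition shift_inv :: "(int \<Rightarrow> nat) \<Rightarrow> (int \<Rightarrow> nat)" where
  "shift_inv \<omega> = (\<lambda>n. \<omega> (n - 1))"

definition is_SFT :: "nat \<Rightarrow> (int \<Rightarrow> nat) set \<Rightarrow> bool" where
  "is_SFT N Sig \<longleftrightarrow> (\<exists>L W. finite W \<and> (\<forall>w\<in>W. length w = L) \<and>
      Sig = {\<omega>. (\<forall>n. \<omega> n \<in> {1..N}) \<and> (\<forall>n. map (\<lambda>i. \<omega> (n + int i)) [0..<L] \<in> W)})"

definition shift_transitive :: "(int \<Rightarrow> nat) set \<Rightarrow> bool" where
  "shift_transitive Sig \<longleftrightarrow> (\<forall>\<omega>1\<in>Sig. \<forall>\<omega>2\<in>Sig. \<forall>m::nat. \<exists>\<omega>\<in>Sig. \<exists>k::nat.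
      (\<forall>j. \<bar>j\<bar> \<le> int m \<longrightarrow> \<omega> j = \<omega>1 j) \<and>
      (\<forall>j. \<bar>j\<bar> \<le> int m \<longrightarrow> \<omega> (j + int k) = \<omega>2 j))"

definition Sigma_space :: "(int \<Rightarrow> nat) set \<Rightarrow> (int \<Rightarrow> nat) measure" where
  "Sigma_space Sig = restrict_space (Pi\<^sub>M UNIV (\<lambda>_::int. count_space (UNIV::nat set))) Sig"

text \<open>phi_n: the function whose graph is F^n(Gamma).
  phi_n(w) = f_{w_{-1}} o ... o f_{w_{-n}} (phi(shift^{-n} w)).\<close>
fun iter_graph :: "(nat \<Rightarrow> real \<Rightarrow> real) \<Rightarrow> ((int \<Rightarrow> nat) \<Rightarrow> real) \<Rightarrow> nat \<Rightarrow> (int \<Rightarrow> nat) \<Rightarrow> real" where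
  "iter_graph f \<phi> 0 \<omega> = \<phi> \<omega>"
| "iter_graph f \<phi> (Suc n) \<omega> = f (\<omega> (-1)) (iter_graph f \<phi> n (shift_inv \<omega>))"

end

theory Submission
  imports Defs
begin

(* Write phi_n = iter_graph f phi n, so that phi_{n+1}(w) = f_{w_{-1}}(phi_n(shift_inv w)).
   Every fibre map f_k is a strictly increasing self-map of I = [0,1]; hence the drift inequality
   phi < phi_1 (or phi > phi_1) propagates along this recursion, and for each w the sequence
   phi_n(w) is monotone in I and converges to a limit psi(w).
   Unwinding the recursion, phi_n(w) depends only on w_{-n},...,w_{-1} and on the coordinates
   j - n with j in a set J of coordinates on which phi depends.  For J = [-M,M] this window is
   finite, so phi_n is a finite combination of cylinder indicators and psi is measurable as a
   pointwise limit; for n > M the window lies in the past {j <= -1}, so psi ignores the future.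
   Finally phi_{n+1}(shift w) = f_{w_0}(phi_n(w)), and continuity of f_{w_0} (it is differentiable)
   gives the invariance psi(shift w) = f_{w_0}(psi(w)). *)

definition depends_only_on :: "(int \<Rightarrow> nat) set \<Rightarrow> int set \<Rightarrow> ((int \<Rightarrow> nat) \<Rightarrow> 'a) \<Rightarrow> bool" where
  "depends_only_on S J g \<longleftrightarrow> (\<forall>\<omega>\<in>S. \<forall>\<omega>'\<in>S. (\<forall>j\<in>J. \<omega> j = \<omega>' j) \<longrightarrow> g \<omega> = g \<omega>')"

lemma depends_only_onD:
  "depends_only_on S J g \<Longrightarrow> \<omega> \<in> S \<Longrightarrow> \<omega>' \<in> S \<Longrightarrow> (\<And>j. j \<in> J \<Longrightarrow> \<omega> j = \<omega>' j) \<Longrightarrow> g \<omega> = g \<omega>'"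
  unfolding depends_only_on_def by blast

lemma depends_only_on_mono: "depends_only_on S J g \<Longrightarrow> J \<subseteq> K \<Longrightarrow> depends_only_on S K g"
  unfolding depends_only_on_def by blast

lemma space_Sigma_space: "space (Sigma_space Sig) = Sig"
  unfolding Sigma_space_def by (simp add: space_restrict_space space_PiM)

lemma cylinder_indicator_measurable:
  fixes J :: "int set" and x :: "int \<Rightarrow> nat" and c :: real
  assumes "finite J"
  shows "(\<lambda>\<omega>. if (\<forall>j\<in>J. \<omega> j = x j) then c else 0) \<in> borel_measurable (Sigma_space Sig)"
  unfolding Sigma_space_def
  by (rule measurable_restrict_space1) (use assms in measurable)

text \<open>On a set of sequences over a finite alphabet, a function that depends only on finitely many
  coordinates is a finite sum of cylinder indicators, hence measurable.\<close>
lemma finitely_dependent_measurable: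
  fixes g :: "(int \<Rightarrow> nat) \<Rightarrow> real"
  assumes J: "finite J" and alphabet: "\<And>\<omega> n. \<omega> \<in> Sig \<Longrightarrow> \<omega> n \<in> A" and A: "finite A"
    and dep: "depends_only_on Sig J g"
  shows "g \<in> borel_measurable (Sigma_space Sig)"
proof -
  define X where "X = (\<lambda>\<omega>. restrict \<omega> J) ` Sig"
  have "X \<subseteq> PiE J (\<lambda>_. A)" unfolding X_def using alphabet by auto
  then have finX: "finite X" using J A by (meson finite_PiE finite_subset)
  define c where "c x = g (SOME \<omega>. \<omega> \<in> Sig \<and> restrict \<omega> J = x)" for x
  define h where "h \<omega> = (\<Sum>x\<in>X. if (\<forall>j\<in>J. \<omega> j = x j) then c x else 0)" for \<omega>
  have h_meas: "h \<in> borel_measurable (Sigma_space Sig)"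
    unfolding h_def by (rule borel_measurable_sum, rule cylinder_indicator_measurable[OF J])
  have "g \<omega> = h \<omega>" if \<omega>: "\<omega> \<in> Sig" for \<omega>
  proof -
    text \<open>Exactly one summand of h, namely the one indexed by the restriction of \<omega> to J, is active.\<close>
    have "h \<omega> = (\<Sum>x\<in>X. if x = restrict \<omega> J then c x else 0)"
      unfolding h_def
    proof (rule sum.cong)
      fix x assume "x \<in> X"
      then obtain \<omega>0 where "x = restrict \<omega>0 J" unfolding X_def by auto
      then show "(if \<forall>j\<in>J. \<omega> j = x j then c x else 0) = (if x = restrict \<omega> J then c x else 0)"
        by (auto simp: restrict_def fun_eq_iff)
    qed simp
    also have "\<dots> = c (restrict \<omega> J)" using finX \<omega> unfolding X_def by (simp add: sum.delta')
    also have "\<dots> = g \<omega>"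
    proof -
      define \<omega>' where "\<omega>' = (SOME \<omega>'. \<omega>' \<in> Sig \<and> restrict \<omega>' J = restrict \<omega> J)"
      have "\<exists>\<omega>'. \<omega>' \<in> Sig \<and> restrict \<omega>' J = restrict \<omega> J" using \<omega> by blast
      then have "\<omega>' \<in> Sig \<and> restrict \<omega>' J = restrict \<omega> J"
        unfolding \<omega>'_def by (rule someI_ex)
      then have "g \<omega>' = g \<omega>" using \<omega> depends_only_onD[OF dep] by (metis restrict_apply')
      then show ?thesis unfolding c_def \<omega>'_def by simp
    qed
    finally show ?thesis by simp
  qed
  then show ?thesis using h_meas measurable_cong[of "Sigma_space Sig" g h] by (simp add: space_Sigma_space)
qed

lemma SFT_alphabet: "is_SFT N Sig \<Longrightarrow> \<omega> \<in> Sig \<Longrightarrow> \<omega> n \<in> {1..N}"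
  unfolding is_SFT_def by blast

lemma SFT_translate:
  assumes "is_SFT N Sig" and "\<omega> \<in> Sig"
  shows "(\<lambda>n. \<omega> (n + c)) \<in> Sig"
proof -
  obtain L W where Sig: "Sig = {\<omega>. (\<forall>n. \<omega> n \<in> {1..N}) \<and> (\<forall>n. map (\<lambda>i. \<omega> (n + int i)) [0..<L] \<in> W)}"
    using assms(1) unfolding is_SFT_def by blast
  have "map (\<lambda>i. \<omega> (n + c + int i)) [0..<L] \<in> W" "\<omega> (n + c) \<in> {1..N}" for n
    using assms(2) Sig by blast+
  then show ?thesis unfolding Sig by (simp add: algebra_simps)
qed

lemma SFT_shift_closed: "is_SFT N Sig \<Longrightarrow> \<omega> \<in> Sig \<Longrightarrow> shift \<omega> \<in> Sig"
  unfolding shift_def by (rule SFT_translate)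

lemma SFT_shift_inv_closed: "is_SFT N Sig \<Longrightarrow> \<omega> \<in> Sig \<Longrightarrow> shift_inv \<omega> \<in> Sig"
  using SFT_translate[of N Sig \<omega> "-1"] unfolding shift_inv_def by simp

lemma monoseq_unit_interval_limit:
  fixes X :: "nat \<Rightarrow> real"
  assumes "monoseq X" and range: "\<And>n. X n \<in> {0..1}"
  shows "X \<longlonglongrightarrow> lim X" and "lim X \<in> {0..1}"
proof -
  have "Bseq X" by (rule BseqI[of 1]) (use range in auto)
  then show conv: "X \<longlonglongrightarrow> lim X"
    using Bseq_monoseq_convergent assms(1) by (simp add: convergent_LIMSEQ_iff)
  have "lim X \<le> 1" by (rule LIMSEQ_le_const2[OF conv]) (use range in auto)
  moreover have "0 \<le> lim X" by (rule LIMSEQ_le_const[OF conv]) (use range in auto)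
  ultimately show "lim X \<in> {0..1}" by simp
qed

lemma iter_graph_shift: "iter_graph f \<phi> (Suc n) (shift \<omega>) = f (\<omega> 0) (iter_graph f \<phi> n \<omega>)"
proof -
  have "shift_inv (shift \<omega>) = \<omega>" "shift \<omega> (-1) = \<omega> 0" by (simp_all add: shift_def shift_inv_def)
  then show ?thesis by simp
qed

locale fibred_graph =
  fixes S :: "(int \<Rightarrow> nat) set" and A :: "nat set"
    and f :: "nat \<Rightarrow> real \<Rightarrow> real" and \<phi> :: "(int \<Rightarrow> nat) \<Rightarrow> real"
  assumes shift_inv_closed: "\<omega> \<in> S \<Longrightarrow> shift_inv \<omega> \<in> S"
    and alphabet: "\<omega> \<in> S \<Longrightarrow> \<omega> n \<in> A"
    and f_into: "k \<in> A \<Longrightarrow> x \<in> {0..1} \<Longrightarrow> f k x \<in> {0..1}"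
    and phi_range: "\<omega> \<in> S \<Longrightarrow> \<phi> \<omega> \<in> {0..1}"
begin

lemma iter_graph_range: "\<omega> \<in> S \<Longrightarrow> iter_graph f \<phi> n \<omega> \<in> {0..1}"
proof (induction n arbitrary: \<omega>)
  case 0
  then show ?case using phi_range by simp
next
  case (Suc n)
  then have "iter_graph f \<phi> n (shift_inv \<omega>) \<in> {0..1}" using shift_inv_closed by blast
  then show ?case using f_into alphabet Suc.prems by simp
qed

text \<open>Drift propagates: if the fibre maps preserve a relation R on I (R is < for upward drift,
  > for downward drift) and the first image graph is R-related to the initial one, then every
  image graph is R-related to the next.\<close>
lemma iter_graph_drift:
  assumes f_R: "\<And>k x y. k \<in> A \<Longrightarrow> x \<in> {0..1} \<Longrightarrow> y \<in> {0..1} \<Longrightarrow> R x y \<Longrightarrow> R (f k x) (f k y)"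
    and drift: "\<And>\<omega>. \<omega> \<in> S \<Longrightarrow> R (\<phi> \<omega>) (iter_graph f \<phi> 1 \<omega>)"
  shows "\<omega> \<in> S \<Longrightarrow> R (iter_graph f \<phi> n \<omega>) (iter_graph f \<phi> (Suc n) \<omega>)"
proof (induction n arbitrary: \<omega>)
  case 0
  then show ?case using drift by simp
next
  case (Suc n)
  have \<omega>\<^sub>0: "shift_inv \<omega> \<in> S" using Suc.prems shift_inv_closed by blast
  have "R (f (\<omega> (-1)) (iter_graph f \<phi> n (shift_inv \<omega>)))
          (f (\<omega> (-1)) (iter_graph f \<phi> (Suc n) (shift_inv \<omega>)))"
    by (rule f_R[OF alphabet[OF Suc.prems] iter_graph_range[OF \<omega>\<^sub>0] iter_graph_range[OF \<omega>\<^sub>0] Suc.IH[OF \<omega>\<^sub>0]])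
  then show ?case by (simp only: iter_graph.simps)
qed

lemma iter_graph_local:
  assumes phi_dep: "depends_only_on S J \<phi>"
  shows "depends_only_on S ({- int n..-1} \<union> (\<lambda>j. j - int n) ` J) (iter_graph f \<phi> n)"
proof (induction n)
  case 0
  then show ?case using phi_dep by simp
next
  case (Suc n)
  show ?case
    unfolding depends_only_on_def
  proof (intro ballI impI)
    fix \<omega> \<omega>' assume \<omega>: "\<omega> \<in> S" "\<omega>' \<in> S"
      and agree: "\<forall>j \<in> {- int (Suc n)..-1} \<union> (\<lambda>j. j - int (Suc n)) ` J. \<omega> j = \<omega>' j"
    text \<open>Shifting back by one moves the window of Suc n onto the window of n.\<close>
    have "shift_inv \<omega> j = shift_inv \<omega>' j" if "j \<in> {- int n..-1} \<union> (\<lambda>j. j - int n) ` J" for j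
    proof -
      from that have "j - 1 \<in> {- int (Suc n)..-1} \<union> (\<lambda>j. j - int (Suc n)) ` J"
      proof
        assume "j \<in> (\<lambda>j. j - int n) ` J"
        then obtain i where "i \<in> J" "j - 1 = i - int (Suc n)" by auto
        then show ?thesis by (simp add: rev_image_eqI)
      qed simp
      then show ?thesis using agree unfolding shift_inv_def by blast
    qed
    then have "iter_graph f \<phi> n (shift_inv \<omega>) = iter_graph f \<phi> n (shift_inv \<omega>')"
      by (rule depends_only_onD[OF Suc.IH shift_inv_closed[OF \<omega>(1)] shift_inv_closed[OF \<omega>(2)]])
    moreover have "\<omega> (-1) = \<omega>' (-1)" using agree by simp
    ultimately show "iter_graph f \<phi> (Suc n) \<omega> = iter_graph f \<phi> (Suc n) \<omega>'" by simp
  qed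
qed

end

locale drifting_graph = fibred_graph +
  assumes f_mono: "k \<in> A \<Longrightarrow> strict_mono_on {0..1} (f k)"
    and drift: "(\<forall>\<omega>\<in>S. iter_graph f \<phi> 1 \<omega> > \<phi> \<omega>) \<or> (\<forall>\<omega>\<in>S. iter_graph f \<phi> 1 \<omega> < \<phi> \<omega>)"
begin

definition graph_limit :: "(int \<Rightarrow> nat) \<Rightarrow> real" where
  "graph_limit \<omega> = lim (\<lambda>n. iter_graph f \<phi> n \<omega>)"

lemma graph_limit_tendsto:
  assumes \<omega>: "\<omega> \<in> S"
  shows "(\<lambda>n. iter_graph f \<phi> n \<omega>) \<longlonglongrightarrow> graph_limit \<omega>" and "graph_limit \<omega> \<in> {0..1}"
proof -
  let ?X = "\<lambda>n. iter_graph f \<phi> n \<omega>"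
  have f_less: "f k x < f k y" if "k \<in> A" "x \<in> {0..1}" "y \<in> {0..1}" "x < y" for k x y
    using strict_mono_onD[OF f_mono[OF that(1)] that(2-4)] .
  have "monoseq ?X"
    using drift
  proof
    assume up: "\<forall>\<omega>\<in>S. iter_graph f \<phi> 1 \<omega> > \<phi> \<omega>"
    have "?X n < ?X (Suc n)" for n
      by (rule iter_graph_drift[of "(<)", OF f_less _ \<omega>]) (use up in blast)+
    then show ?thesis unfolding monoseq_Suc by (simp add: less_imp_le)
  next
    assume down: "\<forall>\<omega>\<in>S. iter_graph f \<phi> 1 \<omega> < \<phi> \<omega>"
    have "?X n > ?X (Suc n)" for n
      by (rule iter_graph_drift[of "(>)", OF f_less _ \<omega>]) (use down in blast)+
    then show ?thesis unfolding monoseq_Suc by (simp add: less_imp_le)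
  qed
  then show "?X \<longlonglongrightarrow> graph_limit \<omega>" "graph_limit \<omega> \<in> {0..1}"
    unfolding graph_limit_def using iter_graph_range[OF \<omega>] by (rule monoseq_unit_interval_limit)+
qed

text \<open>Measurability in part (1): over a finite alphabet, if \<phi> depends on finitely many coordinates
  then so does every image graph, and their pointwise limit is measurable.\<close>
lemma graph_limit_measurable:
  assumes A: "finite A" and J: "finite J" and phi_dep: "depends_only_on S J \<phi>"
  shows "graph_limit \<in> borel_measurable (Sigma_space S)"
proof (rule borel_measurable_LIMSEQ_real)
  show "(\<lambda>n. iter_graph f \<phi> n \<omega>) \<longlonglongrightarrow> graph_limit \<omega>" if "\<omega> \<in> space (Sigma_space S)" for \<omega>
    using that by (simp add: space_Sigma_space graph_limit_tendsto)
  show "iter_graph f \<phi> n \<in> borel_measurable (Sigma_space S)" for n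
    by (rule finitely_dependent_measurable[OF _ _ A iter_graph_local[OF phi_dep]]) (simp_all add: J alphabet)
qed

text \<open>Part (2): if \<phi> depends only on coordinates at most m, then from time m + 1 on the image
  graphs, and hence their limit, depend only on the past coordinates j \<le> -1.\<close>
lemma graph_limit_past:
  assumes phi_dep: "depends_only_on S J \<phi>" and J_bounded: "J \<subseteq> {..int m}"
  shows "depends_only_on S {..-1} graph_limit"
  unfolding depends_only_on_def
proof (intro ballI impI)
  fix \<omega> \<omega>' assume \<omega>: "\<omega> \<in> S" "\<omega>' \<in> S" and past: "\<forall>j\<in>{..-1}. \<omega> j = \<omega>' j"
  have "iter_graph f \<phi> n \<omega> = iter_graph f \<phi> n \<omega>'" if "Suc m \<le> n" for n
  proof -
    have "{- int n..-1} \<union> (\<lambda>j. j - int n) ` J \<subseteq> {..-1}" using J_bounded that by force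
    with iter_graph_local[OF phi_dep] have "depends_only_on S {..-1} (iter_graph f \<phi> n)"
      by (rule depends_only_on_mono)
    then show ?thesis by (rule depends_only_onD[OF _ \<omega>]) (use past in simp)
  qed
  then have "\<forall>\<^sub>F n in sequentially. iter_graph f \<phi> n \<omega> = iter_graph f \<phi> n \<omega>'"
    by (rule eventually_sequentiallyI)
  with graph_limit_tendsto(1)[OF \<omega>(1)] have "(\<lambda>n. iter_graph f \<phi> n \<omega>') \<longlonglongrightarrow> graph_limit \<omega>"
    by (rule Lim_transform_eventually)
  then show "graph_limit \<omega> = graph_limit \<omega>'" using graph_limit_tendsto(1)[OF \<omega>(2)] by (rule LIMSEQ_unique)
qed

lemma graph_limit_invariant:
  assumes shift_closed: "\<And>\<omega>. \<omega> \<in> S \<Longrightarrow> shift \<omega> \<in> S"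
    and f_cont: "\<And>k. k \<in> A \<Longrightarrow> continuous_on {0..1} (f k)"
    and \<omega>: "\<omega> \<in> S"
  shows "graph_limit (shift \<omega>) = f (\<omega> 0) (graph_limit \<omega>)"
proof -
  have "(\<lambda>n. f (\<omega> 0) (iter_graph f \<phi> n \<omega>)) \<longlonglongrightarrow> f (\<omega> 0) (graph_limit \<omega>)"
    by (rule continuous_on_tendsto_compose[OF f_cont[OF alphabet[OF \<omega>]] graph_limit_tendsto[OF \<omega>]])
       (intro always_eventually allI iter_graph_range[OF \<omega>])
  moreover have "(\<lambda>n. f (\<omega> 0) (iter_graph f \<phi> n \<omega>)) \<longlonglongrightarrow> graph_limit (shift \<omega>)"
    using LIMSEQ_Suc[OF graph_limit_tendsto(1)[OF shift_closed[OF \<omega>]]] by (simp only: iter_graph_shift)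
  ultimately show ?thesis using LIMSEQ_unique by blast
qed

end

theorem mainTheorem13:
  fixes N :: nat and Sig :: "(int \<Rightarrow> nat) set"
    and f :: "nat \<Rightarrow> real \<Rightarrow> real" and f' :: "nat \<Rightarrow> real \<Rightarrow> real"
    and \<phi> :: "(int \<Rightarrow> nat) \<Rightarrow> real"
  assumes SFT: "is_SFT N Sig"
    and trans: "shift_transitive Sig"
    and f_into: "\<And>k. k \<in> {1..N} \<Longrightarrow> f k ` {0..1} \<subseteq> {0..1}"
    and f_mono: "\<And>k. k \<in> {1..N} \<Longrightarrow> strict_mono_on {0..1} (f k)"
    and f_deriv: "\<And>k x. k \<in> {1..N} \<Longrightarrow> x \<in> {0..1} \<Longrightarrow>
                    (f k has_real_derivative f' k x) (at x within {0..1})"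
    and f'_cont: "\<And>k. k \<in> {1..N} \<Longrightarrow> continuous_on {0..1} (f' k)"
    and f'_pos: "\<And>k x. k \<in> {1..N} \<Longrightarrow> x \<in> {0..1} \<Longrightarrow> f' k x > 0"
    and phi_range: "\<And>\<omega>. \<omega> \<in> Sig \<Longrightarrow> \<phi> \<omega> \<in> {0..1}"
    and phi_finite: "\<exists>M::nat. \<forall>\<omega>\<in>Sig. \<forall>\<omega>'\<in>Sig.
                       (\<forall>j. \<bar>j\<bar> \<le> int M \<longrightarrow> \<omega> j = \<omega>' j) \<longrightarrow> \<phi> \<omega> = \<phi> \<omega>'"
    and drift: "(\<forall>\<omega>\<in>Sig. iter_graph f \<phi> 1 \<omega> > \<phi> \<omega>) \<or>
                (\<forall>\<omega>\<in>Sig. iter_graph f \<phi> 1 \<omega> < \<phi> \<omega>)"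
  shows "\<exists>\<psi> :: (int \<Rightarrow> nat) \<Rightarrow> real.
           (\<forall>\<omega>\<in>Sig. (\<lambda>n. iter_graph f \<phi> n \<omega>) \<longlonglongrightarrow> \<psi> \<omega>)
         \<and> (\<forall>\<omega>\<in>Sig. \<psi> \<omega> \<in> {0..1})
         \<and> \<psi> \<in> borel_measurable (Sigma_space Sig)
         \<and> (\<forall>\<omega>\<in>Sig. \<forall>\<omega>'\<in>Sig. (\<forall>j\<le>-1. \<omega> j = \<omega>' j) \<longrightarrow> \<psi> \<omega> = \<psi> \<omega>')
         \<and> (\<forall>\<omega>\<in>Sig. \<psi> (shift \<omega>) = f (\<omega> 0) (\<psi> \<omega>))"
proof -
  obtain M :: nat where M: "\<forall>\<omega>\<in>Sig. \<forall>\<omega>'\<in>Sig. (\<forall>j. \<bar>j\<bar> \<le> int M \<longrightarrow> \<omega> j = \<omega>' j) \<longrightarrow> \<phi> \<omega> = \<phi> \<omega>'"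
    using phi_finite by blast
  have phi_dep: "depends_only_on Sig {- int M..int M} \<phi>"
    unfolding depends_only_on_def
  proof (intro ballI impI)
    fix \<omega> \<omega>' assume \<omega>: "\<omega> \<in> Sig" "\<omega>' \<in> Sig" and "\<forall>j\<in>{- int M..int M}. \<omega> j = \<omega>' j"
    then have "\<forall>j. \<bar>j\<bar> \<le> int M \<longrightarrow> \<omega> j = \<omega>' j" by (auto simp: abs_le_iff)
    with M \<omega> show "\<phi> \<omega> = \<phi> \<omega>'" by blast
  qed
  interpret drifting_graph Sig "{1..N}" f \<phi>
  proof
    show "shift_inv \<omega> \<in> Sig" if "\<omega> \<in> Sig" for \<omega> using SFT_shift_inv_closed[OF SFT that] .
    show "\<omega> n \<in> {1..N}" if "\<omega> \<in> Sig" for \<omega> n using SFT_alphabet[OF SFT that] .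
    show "f k x \<in> {0..1}" if "k \<in> {1..N}" "x \<in> {0..1}" for k x using f_into[OF that(1)] that(2) by blast
  qed (fact phi_range f_mono drift)+
  have f_cont: "continuous_on {0..1} (f k)" if "k \<in> {1..N}" for k
    using f_deriv[OF that] DERIV_continuous continuous_on_eq_continuous_within by blast
  have measurable: "graph_limit \<in> borel_measurable (Sigma_space Sig)"
    by (rule graph_limit_measurable[OF _ _ phi_dep]) simp_all
  have past: "depends_only_on Sig {..-1} graph_limit"
    by (rule graph_limit_past[OF phi_dep, of M]) auto
  show ?thesis
    by (intro exI[of _ graph_limit] conjI ballI allI impI measurable)
       (erule graph_limit_tendsto(1), erule graph_limit_tendsto(2),
        rule depends_only_onD[OF past], assumption+, simp,
        rule graph_limit_invariant[OF SFT_shift_closed[OF SFT] f_cont], assumption+)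
qed

end
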